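(* Let $A(z)=\sum_{n\ge0}\Big(\sum_{P}\operatorname{amp}(P)\Big)z^n$, where the inner sum runs over all Motzkin paths $P$ of length $n$. Then $$A(z)=-(1+v+v^2)(1-v^{-2})\sum_{h\ge1}\frac{v^{h}}{1-v^{h}}-\frac{(1+2v)(1+v+v^2)}{v}.$$
   Context: A Motzkin path of length $n$ is a sequence of $n$ steps, each an up-step $(1,1)$, a down-step $(1,-1)$ or a horizontal step $(1,0)$, starting at $(0,0)$, ending at $(n,0)$, and never going below the $x$-axis. Its height $h$ is the maximal $y$-coordinate reached. A horizontal step on level $j$ is a horizontal step from $(x,j)$ to $(x+1,j)$. The amplitude $\operatorname{amp}(P)$ of a Motzkin path $P$ of height $h$ is $2h+1$ if $P$ has a horizontal step on level $h$, and $2h$ otherwise. Here $v=v(z)=\frac{1-z-\sqrt{1-2z-3z^2}}{2z}$ is the formal power series with $v(0)=0$ satisfying $z=\frac{v}{1+v+v^2}$. *)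

theory Defs
  imports "HOL-Computational_Algebra.Formal_Power_Series"
          "HOL-Computational_Algebra.Formal_Laurent_Series"
begin

(* A path of length n is a list of n steps; step +1 = up (1,1), -1 = down (1,-1),
   0 = horizontal (1,0). *)

definition level :: "int list \<Rightarrow> nat \<Rightarrow> int" where
  "level P i = sum_list (take i P)"

definition motzkin_path :: "int list \<Rightarrow> bool" where
  "motzkin_path P \<longleftrightarrow> set P \<subseteq> {-1, 0, 1} \<and> sum_list P = 0
     \<and> (\<forall>i\<le>length P. level P i \<ge> 0)"

definition motzkin_paths :: "nat \<Rightarrow> int list set" where
  "motzkin_paths n = {P. length P = n \<and> motzkin_path P}"

definition path_height :: "int list \<Rightarrow> int" where
  "path_height P = Max {level P i | i. i \<le> length P}"

definition has_horizontal_at :: "int list \<Rightarrow> int \<Rightarrow> bool" where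
  "has_horizontal_at P j \<longleftrightarrow> (\<exists>i<length P. P ! i = 0 \<and> level P i = j)"

definition amp :: "int list \<Rightarrow> int" where
  "amp P = (if has_horizontal_at P (path_height P) then 2 * path_height P + 1
            else 2 * path_height P)"

definition amp_gf :: "real fps" where
  "amp_gf = Abs_fps (\<lambda>n. real_of_int (\<Sum>P\<in>motzkin_paths n. amp P))"

definition vser :: "real fps" where
  "vser = (THE v. fps_nth v 0 = 0 \<and> fps_X = v / (1 + v + v^2))"

end

theory Submission
  imports Defs
begin

(*
  Let C_b(z) count Motzkin paths of amplitude at most b. Cutting a path after its first step
  (a horizontal step, or an up-step together with its matching down-step) gives
  C_b = 1 + [b >= 1] z C_b + z^2 C_{b-2} C_b: the part under the arch lives in a strip of
  amplitude b - 2. After the substitution z = v/(1+v+v^2) this recurrence is solved by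
  C_{j-1} = (1+v+v^2)(1-v^j)/(1-v^(j+2)), which is verified in the field of formal Laurent series.
  Since amp P = #{k. k < amp P}, A = sum_k (M - C_k), where M = 1+v+v^2 counts all Motzkin paths
  and M - C_k = (1+v+v^2)(1-v^2) v^(k+1)/(1-v^(k+3)); up to the factor v^2 these terms are
  (1+v+v^2)(1-v^2) v^h/(1-v^h) for h >= 3, which gives the formula.
*)

section \<open>Formal power series as a topological ring\<close>

lemma eventually_fst_nth_fps:
  "\<forall>\<^sub>F x in nhds a \<times>\<^sub>F nhds b. fst x $ n = (a :: 'a::group_add fps) $ n"
  using tendsto_fst[OF filterlim_ident, of "(a, b)"] unfolding nhds_prod tendsto_fps_iff by simp

lemma eventually_snd_nth_fps:
  "\<forall>\<^sub>F x in nhds a \<times>\<^sub>F nhds b. snd x $ n = (b :: 'a::group_add fps) $ n"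
  using tendsto_snd[OF filterlim_ident, of "(a, b)"] unfolding nhds_prod tendsto_fps_iff by simp

instance fps :: (ab_group_add) topological_ab_group_add
proof
  fix a b :: "'a fps"
  show "((\<lambda>x. fst x + snd x) \<longlongrightarrow> a + b) (nhds a \<times>\<^sub>F nhds b)"
    unfolding tendsto_fps_iff
  proof
    fix n
    have "\<forall>\<^sub>F x in nhds a \<times>\<^sub>F nhds b. fst x $ n = a $ n \<and> snd x $ n = b $ n"
      by (rule eventually_conj[OF eventually_fst_nth_fps eventually_snd_nth_fps])
    then show "\<forall>\<^sub>F x in nhds a \<times>\<^sub>F nhds b. (fst x + snd x) $ n = (a + b) $ n"
      by eventually_elim simp
  qed
  show "(uminus \<longlongrightarrow> - a) (nhds a)"
    using filterlim_ident[of "nhds a"] unfolding tendsto_fps_iff by simp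
qed

instance fps :: (ring) topological_semigroup_mult
proof
  fix a b :: "'a fps"
  show "((\<lambda>x. fst x * snd x) \<longlongrightarrow> a * b) (nhds a \<times>\<^sub>F nhds b)"
    unfolding tendsto_fps_iff
  proof
    fix n
    have "\<forall>\<^sub>F x in nhds a \<times>\<^sub>F nhds b. \<forall>i\<in>{0..n}. fst x $ i = a $ i \<and> snd x $ i = b $ i"
      using eventually_conj[OF eventually_fst_nth_fps eventually_snd_nth_fps]
      by (subst eventually_ball_finite_distrib) auto
    then show "\<forall>\<^sub>F x in nhds a \<times>\<^sub>F nhds b. (fst x * snd x) $ n = (a * b) $ n"
      by eventually_elim (simp add: fps_mult_nth)
  qed
qed

lemma sums_mult_fps: "f sums s \<Longrightarrow> (\<lambda>n. c * f n) sums (c * s :: 'a::ring fps)"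
  unfolding sums_def sum_distrib_left[symmetric] by (rule tendsto_mult_left)

lemma sums_fps_nth_vanishing:
  fixes f :: "nat \<Rightarrow> 'a::ab_group_add fps"
  assumes "\<And>h n. n < h \<Longrightarrow> f h $ n = 0"
  shows "f sums Abs_fps (\<lambda>n. \<Sum>h\<le>n. f h $ n)"
  unfolding sums_def
proof (rule tendsto_fpsI)
  fix n
  have "(\<Sum>h<N. f h) $ n = (\<Sum>h\<le>n. f h $ n)" if "n < N" for N
    unfolding fps_sum_nth using that assms by (intro sum.mono_neutral_right) auto
  then show "\<forall>\<^sub>F N in sequentially. (\<Sum>h<N. f h) $ n = Abs_fps (\<lambda>n. \<Sum>h\<le>n. f h $ n) $ n"
    unfolding eventually_sequentially by (auto intro: exI[of _ "Suc n"])
qed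

section \<open>The series \<open>v\<close>\<close>

lemma fps_X_times_fixpoint_nth:
  "(fps_X * (1 + w + w^2)) $ Suc n
     = (if n = 0 then 1 else 0) + w $ n + (\<Sum>i\<le>n. w $ i * w $ (n - i))"
  for w :: "'a::comm_ring_1 fps"
  by (simp only: fps_X_mult_nth) (simp add: power2_eq_square fps_mult_nth atMost_atLeast0)

fun vser_coeff :: "nat \<Rightarrow> real" where
  "vser_coeff 0 = 0"
| "vser_coeff (Suc n)
     = (if n = 0 then 1 else 0) + vser_coeff n + (\<Sum>i\<le>n. vser_coeff i * vser_coeff (n - i))"

lemma vser_coeff_fixpoint:
  "Abs_fps vser_coeff = fps_X * (1 + Abs_fps vser_coeff + Abs_fps vser_coeff ^ 2)"
proof (rule fps_ext)
  fix n
  show "Abs_fps vser_coeff $ n = (fps_X * (1 + Abs_fps vser_coeff + Abs_fps vser_coeff ^ 2)) $ n"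
    by (cases n) (simp_all only: fps_X_times_fixpoint_nth, simp_all)
qed

lemma fixpoint_eq_vser_coeff:
  assumes "w $ 0 = 0" and "w = fps_X * (1 + w + w^2)"
  shows "w = Abs_fps vser_coeff"
proof -
  have "w $ n = vser_coeff n" for n
  proof (induction n rule: less_induct)
    case (less n)
    show ?case
    proof (cases n)
      case 0
      then show ?thesis using assms(1) by simp
    next
      case (Suc m)
      have "w $ Suc m = (if m = 0 then 1 else 0) + w $ m + (\<Sum>i\<le>m. w $ i * w $ (m - i))"
        by (subst assms(2)) (rule fps_X_times_fixpoint_nth)
      also have "\<dots> = vser_coeff (Suc m)"
        using less.IH Suc by (auto intro!: sum.cong)
      finally show ?thesis using Suc by simp
    qed
  qed
  then show ?thesis by (simp add: fps_eq_iff)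
qed

lemma fps_X_eq_divide_iff_fixpoint:
  fixes w :: "'a::field fps"
  assumes "w $ 0 = 0"
  shows "fps_X = w / (1 + w + w^2) \<longleftrightarrow> w = fps_X * (1 + w + w^2)"
proof -
  have "is_unit (1 + w + w^2)"
    using assms by (simp add: power2_eq_square fps_mult_nth)
  then show ?thesis by (auto simp: unit_eq_div2)
qed

lemma vser_eq_vser_coeff: "vser = Abs_fps vser_coeff"
  unfolding vser_def
proof (rule the_equality)
  have "Abs_fps vser_coeff $ 0 = 0" by simp
  then show "Abs_fps vser_coeff $ 0 = 0
      \<and> fps_X = Abs_fps vser_coeff / (1 + Abs_fps vser_coeff + Abs_fps vser_coeff ^ 2)"
    using fps_X_eq_divide_iff_fixpoint vser_coeff_fixpoint by blast
  show "w = Abs_fps vser_coeff" if "w $ 0 = 0 \<and> fps_X = w / (1 + w + w^2)" for w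
    using that fixpoint_eq_vser_coeff fps_X_eq_divide_iff_fixpoint by blast
qed

lemma vser_nth_0 [simp]: "vser $ 0 = 0"
  by (simp add: vser_eq_vser_coeff)

lemma vser_nth_1: "vser $ 1 = 1"
  by (simp add: vser_eq_vser_coeff)

definition motzkin_gf :: "real fps" where
  "motzkin_gf = 1 + vser + vser^2"

lemma vser_eq_X_times_motzkin_gf: "vser = fps_X * motzkin_gf"
  unfolding motzkin_gf_def vser_eq_vser_coeff by (rule vser_coeff_fixpoint)

lemma vser_power_mult_nth_less: "n < k \<Longrightarrow> (vser ^ k * f) $ n = 0"
  by (simp add: vser_eq_X_times_motzkin_gf power_mult_distrib fps_X_power_mult_nth mult.assoc)

lemma fps_to_fls_divide_unit:
  "(g :: 'a::field fps) $ 0 \<noteq> 0 \<Longrightarrow> fps_to_fls (f / g) = fps_to_fls f / fps_to_fls g"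
  by (rule fls_divide_fps_to_fls[symmetric]) (simp add: subdegree_eq_0)

section \<open>Paths of bounded amplitude\<close>

fun nonneg_from :: "int \<Rightarrow> int list \<Rightarrow> bool" where
  "nonneg_from l [] \<longleftrightarrow> 0 \<le> l"
| "nonneg_from l (s # xs) \<longleftrightarrow> 0 \<le> l \<and> nonneg_from (l + s) xs"

text \<open>\<open>amp_within b l xs\<close>: started at height \<open>l\<close>, the path stays at heights \<open>\<le> b/2\<close> and has
  no horizontal step at height \<open>b/2\<close>; for \<open>l = 0\<close> this means \<open>amp xs \<le> b\<close>.\<close>

fun amp_within :: "int \<Rightarrow> int \<Rightarrow> int list \<Rightarrow> bool" where
  "amp_within b l [] \<longleftrightarrow> 2 * l \<le> b"
| "amp_within b l (s # xs) \<longleftrightarrow> 2 * l \<le> b \<and> (s = 0 \<longrightarrow> 2 * l + 1 \<le> b) \<and> amp_within b (l + s) xs"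

lemma level_0 [simp]: "level P 0 = 0"
  by (simp add: level_def)

lemma level_Cons_Suc [simp]: "level (s # xs) (Suc i) = s + level xs i"
  by (simp add: level_def)

lemma all_le_Suc_iff: "(\<forall>i\<le>Suc n. P i) \<longleftrightarrow> P 0 \<and> (\<forall>i\<le>n. P (Suc i))"
  by (metis Suc_le_mono le0 not0_implies_Suc)

lemma all_less_Suc_iff: "(\<forall>i<Suc n. P i) \<longleftrightarrow> P 0 \<and> (\<forall>i<n. P (Suc i))"
  by (metis Suc_less_eq not0_implies_Suc zero_less_Suc)

lemma nonneg_from_iff: "nonneg_from l xs \<longleftrightarrow> (\<forall>i\<le>length xs. 0 \<le> l + level xs i)"
proof (induction xs arbitrary: l)
  case (Cons s xs)
  show ?case
    unfolding length_Cons all_le_Suc_iff using Cons.IH[of "l + s"] by (simp add: add.assoc)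
qed simp

lemma amp_within_iff:
  "amp_within b l xs \<longleftrightarrow> (\<forall>i\<le>length xs. 2 * (l + level xs i) \<le> b)
     \<and> (\<forall>i<length xs. xs ! i = 0 \<longrightarrow> 2 * (l + level xs i) + 1 \<le> b)"
proof (induction xs arbitrary: l)
  case (Cons s xs)
  show ?case
    unfolding length_Cons all_le_Suc_iff all_less_Suc_iff using Cons.IH[of "l + s"]
    by (auto simp: add.assoc)
qed simp

lemma motzkin_path_iff:
  "motzkin_path P \<longleftrightarrow> set P \<subseteq> {-1, 0, 1} \<and> sum_list P = 0 \<and> nonneg_from 0 P"
  by (simp add: motzkin_path_def nonneg_from_iff)

lemma nonneg_from_start: "nonneg_from l xs \<Longrightarrow> 0 \<le> l"
  by (cases xs) auto

lemma amp_within_start: "amp_within b l xs \<Longrightarrow> 2 * l \<le> b"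
  by (cases xs) auto

lemma nonneg_from_mono: "nonneg_from l xs \<Longrightarrow> l \<le> l' \<Longrightarrow> nonneg_from l' xs"
  by (induction xs arbitrary: l l') auto

lemma amp_within_mono: "amp_within b l xs \<Longrightarrow> b \<le> b' \<Longrightarrow> amp_within b' l xs"
  by (induction xs arbitrary: l) auto

lemma amp_within_shift: "amp_within b (l + 1) xs \<longleftrightarrow> amp_within (b - 2) l xs"
proof (induction xs arbitrary: l)
  case (Cons s xs)
  have shift: "l + 1 + s = (l + s) + 1" by simp
  show ?case using Cons.IH[of "l + s"] unfolding amp_within.simps shift by auto
qed auto

lemma nonneg_from_append:
  "nonneg_from l (xs @ ys) \<longleftrightarrow> nonneg_from l xs \<and> nonneg_from (l + sum_list xs) ys"
  by (induction xs arbitrary: l) (auto simp: algebra_simps dest: nonneg_from_start)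

lemma amp_within_append:
  "amp_within b l (xs @ ys) \<longleftrightarrow> amp_within b l xs \<and> amp_within b (l + sum_list xs) ys"
  by (induction xs arbitrary: l) (auto simp: algebra_simps dest: amp_within_start)

lemma amp_le_iff_amp_within: "amp P \<le> b \<longleftrightarrow> amp_within b 0 P"
proof -
  let ?L = "{level P i | i. i \<le> length P}"
  define H where "H = path_height P"
  have "H \<in> ?L"
    unfolding H_def path_height_def by (rule Max_in) auto
  then obtain j where j: "j \<le> length P" "H = level P j" by auto
  have H_ge: "level P i \<le> H" if "i \<le> length P" for i
    unfolding H_def path_height_def using that by (intro Max_ge) auto
  have amp_H: "amp P = (if has_horizontal_at P H then 2 * H + 1 else 2 * H)"
    by (simp add: amp_def H_def)
  have two_H: "2 * H \<le> amp P"
    unfolding amp_H by simp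
  show ?thesis
  proof
    assume le: "amp P \<le> b"
    have "2 * level P i + 1 \<le> b" if i: "i < length P" "P ! i = 0" for i
    proof (cases "level P i = H")
      case True
      then have "has_horizontal_at P H"
        unfolding has_horizontal_at_def using i by blast
      then show ?thesis using le True amp_H by simp
    next
      case False
      then show ?thesis using le two_H H_ge[of i] i(1) by simp
    qed
    moreover have "2 * level P i \<le> b" if "i \<le> length P" for i
      using le two_H H_ge[OF that] by simp
    ultimately show "amp_within b 0 P"
      unfolding amp_within_iff by simp
  next
    assume within: "amp_within b 0 P"
    then have "2 * H \<le> b"
      unfolding amp_within_iff using j by simp
    moreover have "2 * H + 1 \<le> b" if "has_horizontal_at P H"
      using that within unfolding has_horizontal_at_def amp_within_iff by auto
    ultimately show "amp P \<le> b"
      unfolding amp_H by simp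
  qed
qed

lemma amp_nonneg: "0 \<le> amp P"
  using amp_le_iff_amp_within[of P "-1"] by (cases P) auto

lemma sum_list_ge_neg_length: "set xs \<subseteq> {-1, 0, 1} \<Longrightarrow> - int (length xs) \<le> sum_list xs"
  by (induction xs) auto

lemma amp_within_length:
  "set xs \<subseteq> {-1, 0, 1} \<Longrightarrow> nonneg_from l xs \<Longrightarrow> l + sum_list xs = 0
    \<Longrightarrow> amp_within (int (length xs) + l) l xs"
proof (induction xs arbitrary: l)
  case (Cons s xs)
  have s: "s \<in> {-1, 0, 1}" using Cons.prems(1) by simp
  have "amp_within (int (length xs) + (l + s)) (l + s) xs"
    using Cons by simp
  moreover have "- int (length xs) \<le> sum_list xs"
    using Cons.prems(1) sum_list_ge_neg_length by simp
  ultimately show ?case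
    using s Cons.prems by (auto elim!: amp_within_mono)
qed simp

lemma amp_le_length: "motzkin_path P \<Longrightarrow> amp P \<le> int (length P)"
  using amp_within_length[of P 0] unfolding amp_le_iff_amp_within motzkin_path_iff by simp

section \<open>First-return decomposition\<close>

lemma split_at_first_descent:
  "set xs \<subseteq> {-1, 0, 1} \<Longrightarrow> sum_list xs < 0
    \<Longrightarrow> \<exists>q r. xs = q @ (-1) # r \<and> nonneg_from 0 q \<and> sum_list q = 0"
proof (induction "length xs" arbitrary: xs rule: less_induct)
  case less
  then obtain s ys where xs: "xs = s # ys" by (cases xs) auto
  have ys: "set ys \<subseteq> {-1, 0, 1}" using less.prems xs by auto
  consider "s = -1" | "s = 0" | "s = 1" using less.prems xs by auto
  then show ?case
  proof cases
    case 1
    then show ?thesis using xs by (intro exI[of _ "[]"] exI[of _ ys]) auto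
  next
    case 2
    then obtain q r where "ys = q @ (-1) # r" "nonneg_from 0 q" "sum_list q = 0"
      using less.hyps[of ys] less.prems xs ys by auto
    then show ?thesis using xs 2 by (intro exI[of _ "0 # q"] exI[of _ r]) auto
  next
    case 3
    then obtain q1 r1 where qr1: "ys = q1 @ (-1) # r1" "nonneg_from 0 q1" "sum_list q1 = 0"
      using less.hyps[of ys] less.prems xs ys by auto
    have "set r1 \<subseteq> {-1, 0, 1}" "sum_list r1 < 0" "length r1 < length xs"
      using qr1 ys less.prems xs 3 by auto
    then obtain q2 r2 where qr2: "r1 = q2 @ (-1) # r2" "nonneg_from 0 q2" "sum_list q2 = 0"
      using less.hyps[of r1] by auto
    have "nonneg_from 1 q1" using qr1(2) nonneg_from_mono by fastforce
    then have "nonneg_from 0 (1 # q1 @ (-1) # q2)" using qr1 qr2 by (simp add: nonneg_from_append)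
    then show ?thesis using xs 3 qr1 qr2
      by (intro exI[of _ "1 # q1 @ (-1) # q2"] exI[of _ r2]) auto
  qed
qed

definition arch :: "int list \<times> int list \<Rightarrow> int list" where
  "arch = (\<lambda>(q, r). 1 # q @ (-1) # r)"

lemma motzkin_path_arch:
  assumes "motzkin_path q" and "motzkin_path r"
  shows "motzkin_path (arch (q, r))"
proof -
  have "nonneg_from 1 q" using assms(1) nonneg_from_mono by (fastforce simp: motzkin_path_iff)
  then show ?thesis using assms by (auto simp: motzkin_path_iff nonneg_from_append arch_def)
qed

lemma amp_within_arch:
  "sum_list q = 0 \<Longrightarrow> amp_within b 0 (arch (q, r)) \<longleftrightarrow> amp_within (b - 2) 0 q \<and> amp_within b 0 r"
  using amp_within_shift[of b 0 q] by (auto simp: arch_def amp_within_append dest: amp_within_start)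

lemma arch_decomposition_unique:
  assumes "motzkin_path q" "motzkin_path q'" and "q @ (-1) # r = q' @ (-1) # r'"
  shows "q = q' \<and> r = r'"
proof -
  have not_prefix: False if "motzkin_path a" "motzkin_path c" "a = c @ (-1) # t" for a c t
  proof -
    have "nonneg_from 0 a" "sum_list c = 0" using that by (auto simp: motzkin_path_iff)
    then have "nonneg_from (-1) t" using that(3) by (simp add: nonneg_from_append)
    then show False using nonneg_from_start by fastforce
  qed
  from assms(3) obtain us where
    "(q = q' @ us \<and> us @ (-1) # r = (-1) # r') \<or> (q @ us = q' \<and> (-1) # r = us @ (-1) # r')"
    by (auto simp: append_eq_append_conv2)
  then show ?thesis
    using not_prefix[OF assms(1,2)] not_prefix[OF assms(2,1)] by (cases us) auto
qed

lemma inj_on_arch: "inj_on arch (Collect motzkin_path \<times> Collect motzkin_path)"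
  by (rule inj_onI) (auto simp: arch_def dest: arch_decomposition_unique)

definition amp_le_paths :: "int \<Rightarrow> nat \<Rightarrow> int list set" where
  "amp_le_paths b n = {P \<in> motzkin_paths n. amp P \<le> b}"

lemma mem_amp_le_paths:
  "P \<in> amp_le_paths b n \<longleftrightarrow> length P = n \<and> motzkin_path P \<and> amp_within b 0 P"
  by (auto simp: amp_le_paths_def motzkin_paths_def amp_le_iff_amp_within)

lemma finite_amp_le_paths: "finite (amp_le_paths b n)"
proof (rule finite_subset)
  show "amp_le_paths b n \<subseteq> {xs. set xs \<subseteq> {-1, 0, 1} \<and> length xs = n}"
    by (auto simp: mem_amp_le_paths motzkin_path_iff)
  show "finite {xs. set xs \<subseteq> {-1, 0, 1 :: int} \<and> length xs = n}"
    by (rule finite_lists_length_eq) simp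
qed

lemma amp_le_paths_0: "amp_le_paths b 0 = (if 0 \<le> b then {[]} else {})"
  by (auto simp: mem_amp_le_paths motzkin_path_iff)

lemma amp_le_paths_negative: "b < 0 \<Longrightarrow> amp_le_paths b n = {}"
  by (auto simp: amp_le_paths_def dest: order.trans[OF amp_nonneg])

lemma motzkin_path_Cons_up:
  assumes "motzkin_path (1 # ys)"
  obtains q r where "ys = q @ (-1) # r" and "motzkin_path q" and "motzkin_path r"
proof -
  have ys: "set ys \<subseteq> {-1, 0, 1}" "sum_list ys = -1" "nonneg_from 1 ys"
    using assms by (auto simp: motzkin_path_iff)
  have "\<exists>q r. ys = q @ (-1) # r \<and> nonneg_from 0 q \<and> sum_list q = 0"
    using ys(1,2) by (intro split_at_first_descent) simp_all
  then obtain q r where qr: "ys = q @ (-1) # r" "nonneg_from 0 q" "sum_list q = 0"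
    by blast
  then have "nonneg_from 0 r"
    using ys(3) by (simp add: nonneg_from_append)
  then show ?thesis
    using that qr ys by (auto simp: motzkin_path_iff)
qed

lemma arch_mem_amp_le_paths:
  assumes "q \<in> amp_le_paths (b - 2) i" and "r \<in> amp_le_paths b m"
  shows "arch (q, r) \<in> amp_le_paths b (i + m + 2)"
proof -
  have "sum_list q = 0"
    using assms(1) by (auto simp: mem_amp_le_paths motzkin_path_iff)
  then show ?thesis
    using assms motzkin_path_arch amp_within_arch by (auto simp: mem_amp_le_paths arch_def)
qed

lemma amp_le_paths_Suc:
  "amp_le_paths b (Suc n) = (if 1 \<le> b then (#) 0 ` amp_le_paths b n else {})
     \<union> (\<Union>i<n. arch ` (amp_le_paths (b - 2) i \<times> amp_le_paths b (n - 1 - i)))"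
  (is "?L = ?H \<union> ?A")
proof
  have "?H \<subseteq> ?L"
    by (auto simp: mem_amp_le_paths motzkin_path_iff)
  moreover have "?A \<subseteq> ?L"
  proof
    fix P assume "P \<in> ?A"
    then obtain i q r where "i < n" "q \<in> amp_le_paths (b - 2) i" "r \<in> amp_le_paths b (n - 1 - i)"
        "P = arch (q, r)"
      by blast
    then show "P \<in> ?L"
      using arch_mem_amp_le_paths[of q b i r "n - 1 - i"] by (simp add: Suc_diff_Suc)
  qed
  ultimately show "?H \<union> ?A \<subseteq> ?L" by blast
next
  show "?L \<subseteq> ?H \<union> ?A"
  proof
    fix P assume P: "P \<in> ?L"
    then obtain s ys where Ps: "P = s # ys" by (cases P) (auto simp: mem_amp_le_paths)
    have mP: "motzkin_path P" and wP: "amp_within b 0 P" and len: "length ys = n"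
      using P Ps by (auto simp: mem_amp_le_paths)
    consider "s = -1" | "s = 0" | "s = 1" using mP Ps by (auto simp: motzkin_path_iff)
    then show "P \<in> ?H \<union> ?A"
    proof cases
      case 1
      then show ?thesis using mP Ps nonneg_from_start by (fastforce simp: motzkin_path_iff)
    next
      case 2
      then have "1 \<le> b" "ys \<in> amp_le_paths b n"
        using mP wP Ps len by (auto simp: motzkin_path_iff mem_amp_le_paths)
      then show ?thesis using Ps 2 by auto
    next
      case 3
      then obtain q r where qr: "ys = q @ (-1) # r" "motzkin_path q" "motzkin_path r"
        using motzkin_path_Cons_up mP Ps by blast
      then have P_arch: "P = arch (q, r)" using Ps 3 by (simp add: arch_def)
      then have "amp_within (b - 2) 0 q" "amp_within b 0 r"
        using wP qr(2) amp_within_arch by (auto simp: motzkin_path_iff)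
      moreover have "length q < n" "length r = n - 1 - length q" using len qr(1) by auto
      ultimately have "(q, r) \<in> amp_le_paths (b - 2) (length q) \<times> amp_le_paths b (n - 1 - length q)"
        using qr by (auto simp: mem_amp_le_paths)
      then show ?thesis using P_arch \<open>length q < n\<close> by blast
    qed
  qed
qed

lemma card_amp_le_paths_Suc:
  "card (amp_le_paths b (Suc n)) = (if 1 \<le> b then card (amp_le_paths b n) else 0)
     + (\<Sum>i<n. card (amp_le_paths (b - 2) i) * card (amp_le_paths b (n - 1 - i)))"
proof -
  let ?A = "\<lambda>i. arch ` (amp_le_paths (b - 2) i \<times> amp_le_paths b (n - 1 - i))"
  have paths_motzkin: "amp_le_paths c m \<subseteq> Collect motzkin_path" for c m
    by (auto simp: mem_amp_le_paths)
  have "inj_on arch (amp_le_paths c m \<times> amp_le_paths c' m')" for c m c' m'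
    by (rule inj_on_subset[OF inj_on_arch]) (use paths_motzkin in blast)
  then have card_A: "card (?A i) = card (amp_le_paths (b - 2) i) * card (amp_le_paths b (n - 1 - i))" for i
    by (simp add: card_image card_cartesian_product)
  have "?A i \<inter> ?A j = {}" if "i \<noteq> j" for i j
    using that by (auto simp: mem_amp_le_paths arch_def dest: arch_decomposition_unique)
  then have "card (\<Union>i<n. ?A i) = (\<Sum>i<n. card (?A i))"
    by (intro card_UN_disjoint) (auto simp: finite_amp_le_paths)
  moreover have "card (if 1 \<le> b then (#) 0 ` amp_le_paths b n else {})
      = (if 1 \<le> b then card (amp_le_paths b n) else 0)"
    by (simp add: card_image)
  moreover have "(if 1 \<le> b then (#) 0 ` amp_le_paths b n else {}) \<inter> (\<Union>i<n. ?A i) = {}"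
    by (auto simp: arch_def)
  ultimately show ?thesis
    unfolding amp_le_paths_Suc card_A by (subst card_Un_disjoint) (auto simp: finite_amp_le_paths)
qed

definition amp_le_gf :: "int \<Rightarrow> real fps" where
  "amp_le_gf b = Abs_fps (\<lambda>n. real (card (amp_le_paths b n)))"

lemma amp_le_gf_negative: "b < 0 \<Longrightarrow> amp_le_gf b = 0"
  by (simp add: amp_le_gf_def amp_le_paths_negative fps_eq_iff)

lemma amp_le_gf_0: "amp_le_gf 0 = 1"
proof (rule fps_ext)
  fix n
  show "amp_le_gf 0 $ n = 1 $ n"
    by (cases n) (simp_all add: amp_le_gf_def amp_le_paths_0 card_amp_le_paths_Suc amp_le_paths_negative)
qed

lemma amp_le_gf_fixpoint:
  assumes "0 \<le> b"
  shows "amp_le_gf (b + 1) = 1 + fps_X * amp_le_gf (b + 1) + fps_X^2 * (amp_le_gf (b - 1) * amp_le_gf (b + 1))"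
proof (rule fps_ext)
  fix n
  let ?F = "amp_le_gf (b + 1)" and ?G = "amp_le_gf (b - 1)"
  have F_nth: "?F $ m = real (card (amp_le_paths (b + 1) m))" for m
    by (simp add: amp_le_gf_def)
  have G_nth: "?G $ m = real (card (amp_le_paths (b - 1) m))" for m
    by (simp add: amp_le_gf_def)
  show "?F $ n = (1 + fps_X * ?F + fps_X^2 * (?G * ?F)) $ n"
  proof (cases n)
    case 0
    then show ?thesis using assms by (simp add: F_nth amp_le_paths_0)
  next
    case (Suc m)
    have conv: "(fps_X^2 * (?G * ?F)) $ Suc m
        = (\<Sum>i<m. real (card (amp_le_paths (b - 1) i)) * real (card (amp_le_paths (b + 1) (m - 1 - i))))"
    proof (cases m)
      case (Suc k)
      then show ?thesis
        by (simp only: fps_X_power_mult_nth)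
           (simp add: fps_mult_nth F_nth G_nth atLeast0AtMost lessThan_Suc_atMost)
    qed (simp add: fps_X_power_mult_nth)
    show ?thesis
      unfolding Suc F_nth card_amp_le_paths_Suc fps_add_nth conv using assms by (simp add: F_nth)
  qed
qed

lemma amp_le_gf_recurrence:
  assumes "0 \<le> b"
  shows "amp_le_gf (b + 1) * (1 - fps_X - fps_X^2 * amp_le_gf (b - 1)) = 1"
  using amp_le_gf_fixpoint[OF assms] by (simp add: algebra_simps)

section \<open>The closed form in terms of \<open>v\<close>\<close>

lemma closed_form_recurrence_field:
  fixes w a :: "'a::field"
  assumes q: "q = 1 + w + w^2" and "q \<noteq> 0" "1 - a * w^2 \<noteq> 0" "1 - a * w^4 \<noteq> 0"
  shows "q * (1 - a * w^2) / (1 - a * w^4) * (1 - w / q - (w / q)^2 * (q * (1 - a) / (1 - a * w^2))) = 1"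
proof -
  have "1 - w / q - (w / q)^2 * (q * (1 - a) / (1 - a * w^2))
      = ((q - w) * (1 - a * w^2) - w^2 * (1 - a)) / (q * (1 - a * w^2))"
    using assms(2,3) by (simp add: field_simps power2_eq_square)
  also have "(q - w) * (1 - a * w^2) - w^2 * (1 - a) = 1 - a * w^4"
    unfolding q by algebra
  finally show ?thesis
    using assms(2-) by simp
qed

lemma closed_form_tail_field:
  fixes w a :: "'a::field"
  assumes "1 - a * w^2 \<noteq> 0"
  shows "q - q * (1 - a) / (1 - a * w^2) = a * (q * (1 - w^2) / (1 - a * w^2))"
  using assms by (simp add: field_simps)

lemma fls_vser_nonzero: "fps_to_fls vser \<noteq> 0"
  using vser_nth_1 by auto

lemma one_minus_vser_power_nth_0: "0 < k \<Longrightarrow> (1 - vser ^ k) $ 0 = 1"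
  by (simp add: fps_power_zeroth power_0_left)

lemma fls_one_minus_vser_power_nonzero: "0 < k \<Longrightarrow> 1 - fps_to_fls vser ^ k \<noteq> 0"
  using one_minus_vser_power_nth_0[of k]
  by (metis fps_to_fls_eq_0_iff fps_to_fls_minus fps_one_to_fls fps_to_fls_power fps_zero_nth zero_neq_one)

lemma fls_motzkin_gf: "fps_to_fls motzkin_gf = 1 + fps_to_fls vser + fps_to_fls vser ^ 2"
  by (simp add: motzkin_gf_def fps_to_fls_power)

lemma fls_motzkin_gf_nonzero: "fps_to_fls motzkin_gf \<noteq> 0"
proof
  assume "fps_to_fls motzkin_gf = 0"
  then have "motzkin_gf $ 0 = 0" by simp
  then show False by (simp add: motzkin_gf_def fps_power_zeroth)
qed

lemma fls_X_eq_vser_divide: "fls_X = fps_to_fls vser / fps_to_fls motzkin_gf"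
  using fls_motzkin_gf_nonzero
  by (simp add: vser_eq_X_times_motzkin_gf fls_times_fps_to_fls)

definition amp_le_closed :: "nat \<Rightarrow> real fps" where
  "amp_le_closed j = motzkin_gf * (1 - vser ^ j) / (1 - vser ^ (j + 2))"

lemma fls_amp_le_closed:
  "fps_to_fls (amp_le_closed j)
     = fps_to_fls motzkin_gf * (1 - fps_to_fls vser ^ j) / (1 - fps_to_fls vser ^ (j + 2))"
  by (simp add: amp_le_closed_def fps_to_fls_divide_unit fls_times_fps_to_fls fps_to_fls_power)

lemma amp_le_closed_recurrence:
  "amp_le_closed (j + 2) * (1 - fps_X - fps_X^2 * amp_le_closed j) = 1"
proof -
  define w where "w = fps_to_fls vser"
  define a where "a = w ^ j"
  have pow: "w ^ (j + 2) = a * w^2" "w ^ (j + 2 + 2) = a * w^4" "w ^ (j + 4) = a * w^4"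
    unfolding a_def by (simp_all only: add.assoc power_add) simp_all
  have "fps_to_fls (amp_le_closed (j + 2) * (1 - fps_X - fps_X^2 * amp_le_closed j))
      = fps_to_fls motzkin_gf * (1 - a * w^2) / (1 - a * w^4)
        * (1 - w / fps_to_fls motzkin_gf
           - (w / fps_to_fls motzkin_gf)^2 * (fps_to_fls motzkin_gf * (1 - a) / (1 - a * w^2)))"
    unfolding fls_times_fps_to_fls fps_to_fls_minus fps_to_fls_power fps_one_to_fls fps_X_to_fls
      fls_amp_le_closed fls_X_eq_vser_divide w_def[symmetric] pow a_def ..
  also have "\<dots> = 1"
    using fls_one_minus_vser_power_nonzero[of "j + 2"] fls_one_minus_vser_power_nonzero[of "j + 4"] pow
    by (intro closed_form_recurrence_field fls_motzkin_gf[folded w_def] fls_motzkin_gf_nonzero)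
       (simp_all add: w_def)
  finally show ?thesis by (metis fps_one_to_fls fps_to_fls_eq_iff)
qed

lemma amp_le_closed_0: "amp_le_closed 0 = 0"
  by (simp add: amp_le_closed_def)

lemma amp_le_closed_1: "amp_le_closed 1 = 1"
proof -
  define w where "w = fps_to_fls vser"
  have "1 - w \<noteq> 0" using fls_one_minus_vser_power_nonzero[of 1] by (simp add: w_def)
  have "1 + w + w^2 \<noteq> 0" using fls_motzkin_gf_nonzero by (simp add: fls_motzkin_gf w_def)
  have factor: "1 - w ^ (1 + 2) = (1 + w + w^2) * (1 - w)"
    by (simp add: power2_eq_square power3_eq_cube algebra_simps)
  have "fps_to_fls (amp_le_closed 1) = (1 + w + w^2) * (1 - w ^ 1) / ((1 + w + w^2) * (1 - w))"
    unfolding fls_amp_le_closed fls_motzkin_gf w_def[symmetric] factor ..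
  also have "\<dots> = 1"
    using \<open>1 - w \<noteq> 0\<close> \<open>1 + w + w^2 \<noteq> 0\<close> by (subst power_one_right) (rule divide_self, simp)
  finally show ?thesis by (metis fps_one_to_fls fps_to_fls_eq_iff)
qed

lemma amp_le_gf_eq_closed: "amp_le_gf (int j - 1) = amp_le_closed j"
proof -
  have "amp_le_gf (int j - 1) = amp_le_closed j \<and> amp_le_gf (int (Suc j) - 1) = amp_le_closed (Suc j)"
  proof (induction j)
    case 0
    then show ?case
      by (simp add: amp_le_gf_negative amp_le_gf_0 amp_le_closed_0 amp_le_closed_1[unfolded One_nat_def])
  next
    case (Suc j)
    let ?K = "1 - fps_X - fps_X^2 * amp_le_closed j"
    have "amp_le_gf (int j + 1) * ?K = 1"
      using amp_le_gf_recurrence[of "int j"] Suc.IH by simp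
    have "amp_le_gf (int j + 1) = amp_le_gf (int j + 1) * (amp_le_closed (j + 2) * ?K)"
      by (simp only: amp_le_closed_recurrence mult_1_right)
    also have "\<dots> = amp_le_gf (int j + 1) * ?K * amp_le_closed (j + 2)"
      by (simp only: mult_ac)
    also have "\<dots> = amp_le_closed (j + 2)"
      using \<open>amp_le_gf (int j + 1) * ?K = 1\<close> by simp
    finally have "amp_le_gf (int j + 1) = amp_le_closed (j + 2)" .
    then show ?case using Suc.IH by (simp add: add.commute)
  qed
  then show ?thesis ..
qed

lemma motzkin_gf_minus_amp_le_gf:
  "motzkin_gf - amp_le_gf (int k) = vser ^ (k + 1) * (motzkin_gf * (1 - vser^2) / (1 - vser ^ (k + 3)))"
proof -
  define w where "w = fps_to_fls vser"
  define a where "a = w ^ (k + 1)"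
  have three: "k + 3 = k + 1 + 2" by simp
  have pow: "w ^ (k + 1 + 2) = a * w^2"
    unfolding a_def by (simp only: power_add[symmetric])
  have "1 - a * w^2 \<noteq> 0"
    using fls_one_minus_vser_power_nonzero[of "k + 1 + 2"] unfolding pow w_def[symmetric] by simp
  have "amp_le_gf (int k) = amp_le_closed (k + 1)"
    using amp_le_gf_eq_closed[of "k + 1"] by simp
  have unit: "(1 - vser ^ (k + 1 + 2)) $ 0 \<noteq> 0"
    by (subst one_minus_vser_power_nth_0) simp_all
  have "fps_to_fls (motzkin_gf - amp_le_gf (int k))
      = fps_to_fls motzkin_gf - fps_to_fls motzkin_gf * (1 - a) / (1 - a * w^2)"
    unfolding \<open>amp_le_gf (int k) = amp_le_closed (k + 1)\<close> fps_to_fls_minus fls_amp_le_closed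
      w_def[symmetric] pow a_def ..
  also have "\<dots> = a * (fps_to_fls motzkin_gf * (1 - w^2) / (1 - a * w^2))"
    by (rule closed_form_tail_field) fact
  also have "\<dots> = fps_to_fls (vser ^ (k + 1) * (motzkin_gf * (1 - vser^2) / (1 - vser ^ (k + 3))))"
    unfolding fls_times_fps_to_fls fps_to_fls_divide_unit[OF unit] fps_to_fls_power fps_to_fls_minus
      fps_one_to_fls w_def[symmetric] three pow a_def ..
  finally show ?thesis by (simp only: fps_to_fls_eq_iff)
qed

lemma amp_le_gf_nth_eq_motzkin_gf_nth: "n \<le> k \<Longrightarrow> amp_le_gf (int k) $ n = motzkin_gf $ n"
  using motzkin_gf_minus_amp_le_gf[of k] vser_power_mult_nth_less[of n "k + 1"]
  by (metis diff_eq_eq fps_sub_nth le_imp_less_Suc Suc_eq_plus1 add_0)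

lemma amp_le_paths_length: "amp_le_paths (int n) n = motzkin_paths n"
  using amp_le_length by (auto simp: amp_le_paths_def motzkin_paths_def)

lemma card_motzkin_paths: "real (card (motzkin_paths n)) = motzkin_gf $ n"
  using amp_le_gf_nth_eq_motzkin_gf_nth[of n n] by (simp add: amp_le_gf_def amp_le_paths_length)

section \<open>Summing over the amplitude\<close>

lemma of_int_eq_count_below:
  fixes a :: int
  assumes "0 \<le> a" and "a \<le> int n"
  shows "real_of_int a = (\<Sum>k<n. of_bool (int k < a))"
proof -
  have "{..<n} \<inter> {k. int k < a} = {..<nat a}"
    using assms by auto
  then show ?thesis using assms by simp
qed

lemma finite_motzkin_paths: "finite (motzkin_paths n)"
  using finite_amp_le_paths[of "int n" n] by (simp add: amp_le_paths_length)

lemma amp_gf_nth: "amp_gf $ n = (\<Sum>k<n. (motzkin_gf - amp_le_gf (int k)) $ n)"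
proof -
  let ?M = "motzkin_paths n"
  have count: "real_of_int (amp P) = (\<Sum>k<n. of_bool (int k < amp P))" if "P \<in> ?M" for P
    using that amp_nonneg amp_le_length by (intro of_int_eq_count_below) (auto simp: motzkin_paths_def)
  have tail: "real (card (?M \<inter> {P. int k < amp P})) = (motzkin_gf - amp_le_gf (int k)) $ n" for k
  proof -
    have "?M \<inter> {P. int k < amp P} = ?M - amp_le_paths (int k) n"
      by (auto simp: amp_le_paths_def)
    moreover have "amp_le_paths (int k) n \<subseteq> ?M"
      by (auto simp: amp_le_paths_def)
    ultimately have "real (card (?M \<inter> {P. int k < amp P}))
        = real (card ?M) - real (card (amp_le_paths (int k) n))"
      using finite_amp_le_paths card_mono[OF finite_motzkin_paths]
      by (simp add: card_Diff_subset of_nat_diff)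
    then show ?thesis
      by (simp add: card_motzkin_paths amp_le_gf_def)
  qed
  have "amp_gf $ n = (\<Sum>P\<in>?M. \<Sum>k<n. of_bool (int k < amp P))"
    by (simp add: amp_gf_def count)
  also have "\<dots> = (\<Sum>k<n. \<Sum>P\<in>?M. of_bool (int k < amp P))"
    by (rule sum.swap)
  also have "\<dots> = (\<Sum>k<n. (motzkin_gf - amp_le_gf (int k)) $ n)"
    using finite_motzkin_paths by (simp add: tail)
  finally show ?thesis .
qed

lemma sums_amp_gf: "(\<lambda>k. motzkin_gf - amp_le_gf (int k)) sums amp_gf"
proof -
  have "(\<lambda>k. motzkin_gf - amp_le_gf (int k)) sums Abs_fps (\<lambda>n. \<Sum>k\<le>n. (motzkin_gf - amp_le_gf (int k)) $ n)"
    by (rule sums_fps_nth_vanishing) (simp add: amp_le_gf_nth_eq_motzkin_gf_nth)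
  also have "Abs_fps (\<lambda>n. \<Sum>k\<le>n. (motzkin_gf - amp_le_gf (int k)) $ n) = amp_gf"
    by (simp add: fps_eq_iff amp_gf_nth lessThan_Suc_atMost[symmetric] amp_le_gf_nth_eq_motzkin_gf_nth)
  finally show ?thesis .
qed

definition lambert_term :: "nat \<Rightarrow> real fps" where
  "lambert_term h = vser ^ h / (1 - vser ^ h)"

lemma lambert_term_nth_less: "n < h \<Longrightarrow> lambert_term h $ n = 0"
  unfolding lambert_term_def
  by (subst fps_divide_unit) (simp_all add: fps_power_zeroth power_0_left vser_power_mult_nth_less)

lemma fls_lambert_term:
  "0 < h \<Longrightarrow> fps_to_fls (lambert_term h) = fps_to_fls vser ^ h / (1 - fps_to_fls vser ^ h)"
  by (simp add: lambert_term_def fps_to_fls_divide_unit fps_power_zeroth power_0_left fps_to_fls_power)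

lemma vser_sq_times_motzkin_gf_minus_amp_le_gf:
  "vser^2 * (motzkin_gf - amp_le_gf (int k)) = motzkin_gf * (1 - vser^2) * lambert_term (k + 3)"
proof -
  define w where "w = fps_to_fls vser"
  define b where "b = w ^ (k + 1)"
  have three: "k + 3 = k + 1 + 2" by simp
  have pow: "w ^ (k + 1 + 2) = w^2 * b"
    unfolding b_def by (simp only: power_add mult.commute)
  have unit: "(1 - vser ^ (k + 1 + 2)) $ 0 \<noteq> 0"
    by (subst one_minus_vser_power_nth_0) simp_all
  have lambert: "fps_to_fls (lambert_term (k + 3)) = w^2 * b / (1 - w^2 * b)"
    using fls_lambert_term[of "k + 1 + 2"] unfolding three w_def[symmetric] pow by simp
  have "fps_to_fls (vser^2 * (motzkin_gf - amp_le_gf (int k)))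
      = w^2 * (b * (fps_to_fls motzkin_gf * (1 - w^2) / (1 - w^2 * b)))"
    unfolding motzkin_gf_minus_amp_le_gf fls_times_fps_to_fls three fps_to_fls_divide_unit[OF unit]
      fps_to_fls_power fps_to_fls_minus fps_one_to_fls w_def[symmetric] pow b_def ..
  also have "\<dots> = fps_to_fls motzkin_gf * (1 - w^2) * (w^2 * b / (1 - w^2 * b))"
    by (simp add: ac_simps)
  also have "\<dots> = fps_to_fls (motzkin_gf * (1 - vser^2) * lambert_term (k + 3))"
    unfolding fls_times_fps_to_fls lambert fps_to_fls_minus fps_one_to_fls fps_to_fls_power w_def ..
  finally show ?thesis by (simp only: fps_to_fls_eq_iff)
qed

lemma vser_sq_times_amp_gf:
  "vser^2 * amp_gf
     = motzkin_gf * (1 - vser^2) * ((\<Sum>h. lambert_term (Suc h)) - lambert_term 1 - lambert_term 2)"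
proof -
  let ?c = "motzkin_gf * (1 - vser^2)"
  have "(\<lambda>k. ?c * lambert_term (k + 3)) sums (vser^2 * amp_gf)"
    using sums_mult_fps[OF sums_amp_gf, of "vser^2"]
    unfolding vser_sq_times_motzkin_gf_minus_amp_le_gf .
  moreover obtain S where S: "(\<lambda>k. lambert_term (k + 3)) sums S"
    using sums_fps_nth_vanishing[of "\<lambda>k. lambert_term (k + 3)"] lambert_term_nth_less by force
  ultimately have "vser^2 * amp_gf = ?c * S"
    using sums_mult_fps sums_unique2 by blast
  moreover have "(\<lambda>h. lambert_term (Suc h)) sums (S + lambert_term 2 + lambert_term 1)"
    using sums_Suc[of "\<lambda>h. lambert_term (Suc h)"] sums_Suc[of "\<lambda>h. lambert_term (h + 2)"] S
    by (simp add: numeral_eq_Suc)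
  then have "(\<Sum>h. lambert_term (Suc h)) = S + lambert_term 2 + lambert_term 1"
    by (rule sums_unique[symmetric])
  ultimately show ?thesis
    by simp
qed

lemma solve_for_amp_field:
  fixes w A q L :: "'a::field"
  assumes w: "w \<noteq> 0" "1 - w \<noteq> 0" "1 - w^2 \<noteq> 0"
    and A: "w^2 * A = q * (1 - w^2) * (L - w / (1 - w) - w^2 / (1 - w^2))"
  shows "A = - q * (1 - inverse (w^2)) * L - (1 + 2 * w) * q / w"
proof -
  have distrib: "q * (1 - w^2) * (L - X - Y) = q * (1 - w^2) * L - q * ((1 - w^2) * X) - q * ((1 - w^2) * Y)"
    for X Y by (simp add: algebra_simps)
  have "(1 - w^2) * (w / (1 - w)) = w * (1 + w)"
    using w(2) by (simp add: power2_eq_square field_simps)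
  moreover have "(1 - w^2) * (w^2 / (1 - w^2)) = w^2"
    using w(3) by simp
  ultimately have "w^2 * A = q * (1 - w^2) * L - q * (w * (1 + w)) - q * w^2"
    unfolding A distrib by (simp only:)
  also have "\<dots> = w^2 * (- q * (1 - inverse (w^2)) * L - (1 + 2 * w) * q / w)"
    using w(1) by (simp add: field_simps power2_eq_square)
  finally show ?thesis
    using w(1) by simp
qed

theorem mainTheorem3:
  shows "fps_to_fls amp_gf =
     - fps_to_fls (1 + vser + vser^2) * (1 - inverse (fps_to_fls vser ^ 2))
         * fps_to_fls (\<Sum>h. vser ^ (Suc h) / (1 - vser ^ (Suc h)))
     - fps_to_fls ((1 + 2 * vser) * (1 + vser + vser^2)) / fps_to_fls vser"
proof -
  define w where "w = fps_to_fls vser"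
  have "w^2 * fps_to_fls amp_gf
      = fps_to_fls motzkin_gf * (1 - w^2)
        * (fps_to_fls (\<Sum>h. lambert_term (Suc h)) - w / (1 - w) - w^2 / (1 - w^2))"
    using arg_cong[OF vser_sq_times_amp_gf, of fps_to_fls]
    by (simp add: fls_times_fps_to_fls fps_to_fls_power fls_lambert_term w_def)
  then have "fps_to_fls amp_gf
      = - fps_to_fls motzkin_gf * (1 - inverse (w^2)) * fps_to_fls (\<Sum>h. lambert_term (Suc h))
        - (1 + 2 * w) * fps_to_fls motzkin_gf / w"
    using fls_vser_nonzero fls_one_minus_vser_power_nonzero[of 1] fls_one_minus_vser_power_nonzero[of 2]
    by (intro solve_for_amp_field) (simp_all add: w_def)
  then show ?thesis
    by (simp add: lambert_term_def motzkin_gf_def fls_times_fps_to_fls w_def)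
qed

end
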